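(* Let $G$ be a locally free group whose rank $r(G)$ is not finite. Then for each finitely generated subgroup $A$ of $G$, there exists an element $x\in G$ with $x\notin A$ such that the subgroup $A\langle x\rangle$ of $G$ generated by $A$ and $x$ is isomorphic to the free product $A*\langle x\rangle$.
   Context: A group is locally free if all of its finitely generated subgroups are free. For a finitely generated subgroup $H$ of a locally free group $G$, $\mu_G(H)$ is the least positive integer $m$ such that $H\subseteq F$ for some free subgroup $F$ of $G$ of rank $m$. The rank $r(G)$ is the maximum of $\{\mu_G(H) : H \text{ a finitely generated subgroup of } G\}$ if this maximum exists, and $r(G)=\infty$ otherwise. *)

theory Defs
  imports "HOL-Algebra.Algebra"
begin

text \<open>Words in letters of a set S and their inverses: a letter (True, s) stands for s,
  (False, s) for the inverse of s.\<close>

fun reduced_word :: "(bool \<times> 'a) list \<Rightarrow> bool" where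
  "reduced_word [] = True"
| "reduced_word [_] = True"
| "reduced_word ((b, s) # (c, t) # w) = (\<not> (s = t \<and> b \<noteq> c) \<and> reduced_word ((c, t) # w))"

definition eval_word :: "('a, 'm) monoid_scheme \<Rightarrow> (bool \<times> 'a) list \<Rightarrow> 'a" where
  "eval_word G w = foldr (\<lambda>(b, s) y. (if b then s else inv\<^bsub>G\<^esub> s) \<otimes>\<^bsub>G\<^esub> y) w \<one>\<^bsub>G\<^esub>"

definition free_basis :: "('a, 'm) monoid_scheme \<Rightarrow> 'a set \<Rightarrow> bool" where
  "free_basis G S \<longleftrightarrow> S \<subseteq> carrier G \<and>
     (\<forall>w. w \<noteq> [] \<and> reduced_word w \<and> set (map snd w) \<subseteq> S \<longrightarrow> eval_word G w \<noteq> \<one>\<^bsub>G\<^esub>)"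

definition free_subgroup :: "('a, 'm) monoid_scheme \<Rightarrow> 'a set \<Rightarrow> bool" where
  "free_subgroup G F \<longleftrightarrow> (\<exists>S. free_basis G S \<and> generate G S = F)"

definition free_subgroup_rank :: "('a, 'm) monoid_scheme \<Rightarrow> 'a set \<Rightarrow> nat \<Rightarrow> bool" where
  "free_subgroup_rank G F m \<longleftrightarrow>
     (\<exists>S. free_basis G S \<and> generate G S = F \<and> finite S \<and> card S = m)"

definition fg_subgroup :: "('a, 'm) monoid_scheme \<Rightarrow> 'a set \<Rightarrow> bool" where
  "fg_subgroup G H \<longleftrightarrow> (\<exists>T. finite T \<and> T \<subseteq> carrier G \<and> H = generate G T)"

definition locally_free :: "('a, 'm) monoid_scheme \<Rightarrow> bool" where
  "locally_free G \<longleftrightarrow> group G \<and> (\<forall>H. fg_subgroup G H \<longrightarrow> free_subgroup G H)"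

definition mu :: "('a, 'm) monoid_scheme \<Rightarrow> 'a set \<Rightarrow> nat" where
  "mu G H = (LEAST m. 0 < m \<and> (\<exists>F. free_subgroup_rank G F m \<and> H \<subseteq> F))"

definition rank_infinite :: "('a, 'm) monoid_scheme \<Rightarrow> bool" where
  "rank_infinite G \<longleftrightarrow>
     \<not> (\<exists>M \<in> {mu G H | H. fg_subgroup G H}. \<forall>k \<in> {mu G H | H. fg_subgroup G H}. k \<le> M)"

text \<open>Internal free product: K is the subgroup generated by subgroups A and B and the
  natural map A * B \<rightarrow> K is an isomorphism, i.e. no nonempty alternating word with
  nontrivial letters from A and B evaluates to the identity (normal form theorem).
  A letter (True, a) is taken from A, (False, b) from B.\<close>

fun alternating :: "(bool \<times> 'a) list \<Rightarrow> bool" where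
  "alternating [] = True"
| "alternating [_] = True"
| "alternating ((b, _) # (c, y) # w) = (b \<noteq> c \<and> alternating ((c, y) # w))"

definition internal_free_product ::
  "('a, 'm) monoid_scheme \<Rightarrow> 'a set \<Rightarrow> 'a set \<Rightarrow> 'a set \<Rightarrow> bool" where
  "internal_free_product G K A B \<longleftrightarrow>
     subgroup A G \<and> subgroup B G \<and> K = generate G (A \<union> B) \<and>
     (\<forall>w. w \<noteq> [] \<and> alternating w \<and>
          (\<forall>(b, y) \<in> set w. y \<noteq> \<one>\<^bsub>G\<^esub> \<and> (if b then y \<in> A else y \<in> B))
          \<longrightarrow> foldr (\<lambda>(b, y) z. y \<otimes>\<^bsub>G\<^esub> z) w \<one>\<^bsub>G\<^esub> \<noteq> \<one>\<^bsub>G\<^esub>)"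

end

theory Submission
  imports Defs
begin

text \<open>Suppose no \<open>x\<close> works, and let \<open>B\<^sub>0\<close> be a free basis of \<open>A\<close>. If \<open>B\<close> is a finite free basis
  with \<open>A \<subseteq> \<langle>B\<rangle>\<close> and \<open>h \<in> G\<close>, then \<open>\<langle>B, h\<rangle>\<close> is free of rank at most \<open>|B| + 1\<close>. Were the rank
  \<open>|B| + 1\<close>, the generating set \<open>B \<union> {h}\<close> would itself be a basis, because free groups of finite
  rank are Hopfian, and then \<open>\<langle>A, h\<rangle> = A * \<langle>h\<rangle>\<close>. So the rank never grows: every finitely
  generated subgroup lies in a free subgroup of rank at most \<open>|B\<^sub>0|\<close>, and \<open>r(G)\<close> is finite.
  Both facts about free groups (rank is at most the number of generators, and Hopficity) come
  from counting homomorphisms into finite groups, using that every nontrivial reduced word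
  survives in some permutation representation.\<close>

section \<open>Words and free reduction\<close>

definition no_cancel :: "bool \<times> 'a \<Rightarrow> bool \<times> 'a \<Rightarrow> bool" where
  "no_cancel x y \<longleftrightarrow> \<not> (snd x = snd y \<and> fst x \<noteq> fst y)"

definition symbols :: "(bool \<times> 'a) list \<Rightarrow> 'a set" where
  "symbols w = set (map snd w)"

definition inverse_word :: "(bool \<times> 'a) list \<Rightarrow> (bool \<times> 'a) list" where
  "inverse_word w = rev (map (apfst Not) w)"

lemma symbols_simps [simp]:
  "symbols [] = {}"
  "symbols (x # w) = insert (snd x) (symbols w)"
  "symbols (v @ w) = symbols v \<union> symbols w"
  "symbols (map (apsnd f) w) = f ` symbols w"
  "symbols (inverse_word w) = symbols w"
  by (force simp: symbols_def inverse_word_def)+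

lemma inverse_word_simps [simp]:
  "inverse_word [] = []"
  "inverse_word (x # w) = inverse_word w @ [apfst Not x]"
  by (simp_all add: inverse_word_def)

lemma map_apsnd_inverse_word: "map (apsnd f) (inverse_word w) = inverse_word (map (apsnd f) w)"
  by (induct w) (auto simp: apsnd_apfst_commute)

lemma map_apsnd_cong: "(\<And>s. s \<in> symbols w \<Longrightarrow> f s = g s) \<Longrightarrow> map (apsnd f) w = map (apsnd g) w"
  by (induct w) auto

lemma reduced_word_iff_successively: "reduced_word w \<longleftrightarrow> successively no_cancel w"
  by (induct w rule: reduced_word.induct) (auto simp: no_cancel_def)

lemma successively_inverse_word [simp]:
  "successively no_cancel (inverse_word w) \<longleftrightarrow> successively no_cancel w"
proof -
  have flip: "(\<lambda>x y. no_cancel (apfst Not y) (apfst Not x)) = no_cancel"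
    by (auto simp: fun_eq_iff no_cancel_def)
  show ?thesis
    unfolding inverse_word_def successively_rev successively_map flip ..
qed

fun free_reduce :: "(bool \<times> 'a) list \<Rightarrow> (bool \<times> 'a) list" where
  "free_reduce [] = []"
| "free_reduce (x # w) =
     (case free_reduce w of
        [] \<Rightarrow> [x]
      | y # v \<Rightarrow> if no_cancel x y then x # y # v else v)"

lemma symbols_free_reduce: "symbols (free_reduce w) \<subseteq> symbols w"
  by (induct w) (auto split: list.splits)

lemma successively_free_reduce: "successively no_cancel (free_reduce w)"
  by (induct w) (auto split: list.splits simp: successively_Cons)

lemma eval_word_simps [simp]:
  "eval_word G [] = \<one>\<^bsub>G\<^esub>"
  "eval_word G ((b, s) # w) = (if b then s else inv\<^bsub>G\<^esub> s) \<otimes>\<^bsub>G\<^esub> eval_word G w"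
  by (simp_all add: eval_word_def)

lemma free_basisD:
  "free_basis G S \<Longrightarrow> w \<noteq> [] \<Longrightarrow> successively no_cancel w \<Longrightarrow> symbols w \<subseteq> S
    \<Longrightarrow> eval_word G w \<noteq> \<one>\<^bsub>G\<^esub>"
  by (auto simp: free_basis_def reduced_word_iff_successively symbols_def)

lemma free_basis_carrier: "free_basis G S \<Longrightarrow> S \<subseteq> carrier G"
  by (simp add: free_basis_def)

context group
begin

lemma eval_word_closed: "symbols w \<subseteq> carrier G \<Longrightarrow> eval_word G w \<in> carrier G"
  by (induct w) auto

lemma eval_word_append:
  "symbols v \<subseteq> carrier G \<Longrightarrow> symbols w \<subseteq> carrier G
    \<Longrightarrow> eval_word G (v @ w) = eval_word G v \<otimes> eval_word G w"
  by (induct v) (auto simp: m_assoc eval_word_closed)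

lemma eval_inverse_word:
  "symbols w \<subseteq> carrier G \<Longrightarrow> eval_word G (inverse_word w) = inv (eval_word G w)"
  by (induct w) (auto simp: eval_word_append eval_word_closed inv_mult_group)

lemma letters_cancel:
  "s \<in> carrier G \<Longrightarrow> z \<in> carrier G \<Longrightarrow> b \<noteq> c
    \<Longrightarrow> (if b then s else inv s) \<otimes> ((if c then s else inv s) \<otimes> z) = z"
  by (cases b) (auto simp: m_assoc[symmetric])

lemma eval_free_reduce:
  "f ` symbols w \<subseteq> carrier G
    \<Longrightarrow> eval_word G (map (apsnd f) (free_reduce w)) = eval_word G (map (apsnd f) w)"
proof (induct w)
  case (Cons x w)
  obtain b s where x: "x = (b, s)" by force
  have IH: "eval_word G (map (apsnd f) (free_reduce w)) = eval_word G (map (apsnd f) w)"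
    using Cons by simp
  show ?case
  proof (cases "free_reduce w")
    case Nil
    then show ?thesis using IH x by simp
  next
    fix y v assume red: "free_reduce w = y # v"
    obtain c t where y: "y = (c, t)" by force
    show ?thesis
    proof (cases "no_cancel x y")
      case True
      then show ?thesis using red IH x by simp
    next
      case False
      then have ts: "t = s" and bc: "b \<noteq> c" using x y by (auto simp: no_cancel_def)
      have fs: "f s \<in> carrier G" and fv: "f ` symbols v \<subseteq> carrier G"
        using Cons.prems red symbols_free_reduce[of w] x by auto
      have "eval_word G (map (apsnd f) (x # w))
          = (if b then f s else inv f s) \<otimes> ((if c then f s else inv f s) \<otimes> eval_word G (map (apsnd f) v))"
        using IH red x y ts by simp
      also have "\<dots> = eval_word G (map (apsnd f) v)"
        using bc fs fv by (simp add: letters_cancel eval_word_closed)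
      finally show ?thesis using False red by simp
    qed
  qed
qed simp

lemma eval_free_reduce_id:
  "symbols w \<subseteq> carrier G \<Longrightarrow> eval_word G (free_reduce w) = eval_word G w"
  using eval_free_reduce[of id w] by simp

lemma eval_word_in_subgroup:
  assumes K: "subgroup K G"
  shows "symbols w \<subseteq> K \<Longrightarrow> eval_word G w \<in> K"
  by (induct w) (auto simp: subgroup.m_closed[OF K] subgroup.m_inv_closed[OF K] subgroup.one_closed[OF K])

lemma generate_reduced_word:
  assumes S: "S \<subseteq> carrier G" and g: "g \<in> generate G S"
  obtains w where "symbols w \<subseteq> S" "successively no_cancel w" "eval_word G w = g"
proof -
  from g have "\<exists>w. symbols w \<subseteq> S \<and> eval_word G w = g"
  proof (induct rule: generate.induct)
    case one
    show ?case by (rule exI[of _ "[]"]) simp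
  next
    case (incl h)
    then show ?case using S by (intro exI[of _ "[(True, h)]"]) auto
  next
    case (inv h)
    then show ?case using S by (intro exI[of _ "[(False, h)]"]) auto
  next
    case (eng h1 h2)
    then obtain w1 w2 where "symbols w1 \<subseteq> S" "eval_word G w1 = h1" "symbols w2 \<subseteq> S" "eval_word G w2 = h2"
      by blast
    then show ?case using S by (intro exI[of _ "w1 @ w2"]) (auto simp: eval_word_append)
  qed
  then obtain w where "symbols w \<subseteq> S" "eval_word G w = g" by blast
  then show ?thesis
    using that[of "free_reduce w"] symbols_free_reduce[of w] successively_free_reduce[of w]
      eval_free_reduce_id[of w] S by auto
qed

section \<open>Homomorphisms out of a free basis\<close>

lemma free_basis_reduced_word_unique:
  assumes basis: "free_basis G S"
  shows "successively no_cancel v \<Longrightarrow> successively no_cancel w \<Longrightarrow> symbols v \<subseteq> S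
    \<Longrightarrow> symbols w \<subseteq> S \<Longrightarrow> eval_word G v = eval_word G w \<Longrightarrow> v = w"
proof (induct v arbitrary: w)
  case Nil
  then show ?case using free_basisD[OF basis, of w] by auto
next
  case (Cons x v)
  have S: "S \<subseteq> carrier G" using basis by (rule free_basis_carrier)
  show ?case
  proof (cases w)
    case Nil
    then show ?thesis using Cons.prems free_basisD[OF basis, of "x # v"] by auto
  next
    fix y w' assume w: "w = y # w'"
    obtain b s where bs: "x = (b, s)" by force
    have carrier: "s \<in> carrier G" "symbols v \<subseteq> carrier G" "symbols w \<subseteq> carrier G"
      using Cons.prems S bs by auto
    have x: "successively no_cancel v" "symbols v \<subseteq> S"
      and w': "successively no_cancel w'" "symbols w' \<subseteq> S"
      using Cons.prems w by (auto simp: successively_Cons)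
    show ?thesis
    proof (cases "x = y")
      case True
      have "eval_word G (x # v) = eval_word G (x # w')"
        using Cons.prems(5) True w by simp
      then have "eval_word G v = eval_word G w'"
        using carrier w bs by (simp add: eval_word_closed)
      then have "v = w'" by (rule Cons.hyps[OF x(1) w'(1) x(2) w'(2)])
      then show ?thesis using True w by simp
    next
      case False
      \<comment> \<open>otherwise the reduced word \<open>w\<^sup>-\<^sup>1 x v\<close> would evaluate to \<open>\<one>\<close>\<close>
      let ?W = "inverse_word w @ x # v"
      have "no_cancel (apfst Not y) x"
        using False by (cases x; cases y) (auto simp: no_cancel_def)
      then have "successively no_cancel ?W"
        using Cons.prems(1,2) w
        by (simp only: successively_append_iff successively_inverse_word) simp
      moreover have "eval_word G ?W = \<one>"
        using Cons.prems(5) carrier bs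
        by (simp add: eval_word_append eval_inverse_word eval_word_closed del: eval_word_simps)
      moreover have "symbols ?W \<subseteq> S" using Cons.prems(3,4) by simp
      ultimately show ?thesis using free_basisD[OF basis, of ?W] by simp
    qed
  qed
qed

text \<open>Meaningful only for \<open>g \<in> generate G S\<close> with \<open>S\<close> a free basis; elsewhere \<open>THE\<close> picks an
  unspecified word.\<close>
definition normal_form :: "'a set \<Rightarrow> 'a \<Rightarrow> (bool \<times> 'a) list" where
  "normal_form S g = (THE w. symbols w \<subseteq> S \<and> successively no_cancel w \<and> eval_word G w = g)"

definition free_lift :: "'a set \<Rightarrow> ('c, 'd) monoid_scheme \<Rightarrow> ('a \<Rightarrow> 'c) \<Rightarrow> 'a \<Rightarrow> 'c" where
  "free_lift S H f g = eval_word H (map (apsnd f) (normal_form S g))"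

lemma normal_form_eval_word:
  assumes basis: "free_basis G S" and w: "symbols w \<subseteq> S"
  shows "normal_form S (eval_word G w) = free_reduce w"
  unfolding normal_form_def
proof (rule the_equality)
  have S: "S \<subseteq> carrier G" using basis by (rule free_basis_carrier)
  show red: "symbols (free_reduce w) \<subseteq> S \<and> successively no_cancel (free_reduce w)
      \<and> eval_word G (free_reduce w) = eval_word G w"
    using w S symbols_free_reduce[of w] successively_free_reduce[of w] eval_free_reduce_id[of w]
    by auto
  fix u
  assume "symbols u \<subseteq> S \<and> successively no_cancel u \<and> eval_word G u = eval_word G w"
  then show "u = free_reduce w"
    using red by (intro free_basis_reduced_word_unique[OF basis]) auto
qed

context
  fixes S and H :: "('c, 'd) monoid_scheme" and f :: "'a \<Rightarrow> 'c"
  assumes basis: "free_basis G S" and H: "group H" and f: "f ` S \<subseteq> carrier H"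
begin

lemma free_lift_eval_word:
  "symbols w \<subseteq> S \<Longrightarrow> free_lift S H f (eval_word G w) = eval_word H (map (apsnd f) w)"
  unfolding free_lift_def normal_form_eval_word[OF basis]
  by (rule group.eval_free_reduce[OF H]) (use f in auto)

lemma free_lift_basis:
  assumes "s \<in> S"
  shows "free_lift S H f s = f s"
proof -
  have "s \<in> carrier G" "f s \<in> carrier H" using assms free_basis_carrier[OF basis] f by auto
  then show ?thesis
    using free_lift_eval_word[of "[(True, s)]"] assms by (simp add: monoid.r_one[OF group.is_monoid[OF H]])
qed

lemma free_lift_one: "free_lift S H f \<one> = \<one>\<^bsub>H\<^esub>"
  using free_lift_eval_word[of "[]"] by simp

lemma free_lift_closed:
  assumes "x \<in> generate G S"
  shows "free_lift S H f x \<in> carrier H"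
proof -
  obtain u where u: "symbols u \<subseteq> S" "eval_word G u = x"
    using generate_reduced_word[OF free_basis_carrier[OF basis] assms] by blast
  have "eval_word H (map (apsnd f) u) \<in> carrier H"
    using u f by (intro group.eval_word_closed[OF H]) auto
  then show ?thesis using u(1) by (simp add: free_lift_eval_word flip: u(2))
qed

lemma free_lift_mult:
  assumes "x \<in> generate G S" "y \<in> generate G S"
  shows "free_lift S H f (x \<otimes> y) = free_lift S H f x \<otimes>\<^bsub>H\<^esub> free_lift S H f y"
proof -
  have S: "S \<subseteq> carrier G" using basis by (rule free_basis_carrier)
  obtain u v where u: "symbols u \<subseteq> S" "eval_word G u = x" and v: "symbols v \<subseteq> S" "eval_word G v = y"
    using generate_reduced_word[OF S] assms by metis
  have "free_lift S H f (x \<otimes> y) = free_lift S H f (eval_word G (u @ v))"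
    using u v S by (simp add: eval_word_append)
  also have "\<dots> = eval_word H (map (apsnd f) u) \<otimes>\<^bsub>H\<^esub> eval_word H (map (apsnd f) v)"
  proof -
    have "symbols (map (apsnd f) u) \<subseteq> carrier H" "symbols (map (apsnd f) v) \<subseteq> carrier H"
      using u v f by auto
    then show ?thesis using u v by (simp add: free_lift_eval_word group.eval_word_append[OF H])
  qed
  finally show ?thesis using u(1) v(1) by (simp add: free_lift_eval_word flip: u(2) v(2))
qed

lemma free_lift_inv:
  assumes "x \<in> generate G S"
  shows "free_lift S H f (inv x) = inv\<^bsub>H\<^esub> free_lift S H f x"
proof -
  have S: "S \<subseteq> carrier G" using basis by (rule free_basis_carrier)
  obtain u where u: "symbols u \<subseteq> S" "eval_word G u = x"
    using generate_reduced_word[OF S] assms by metis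
  have "free_lift S H f (inv x) = free_lift S H f (eval_word G (inverse_word u))"
    using u S by (simp add: eval_inverse_word)
  also have "\<dots> = inv\<^bsub>H\<^esub> eval_word H (map (apsnd f) u)"
  proof -
    have "symbols (map (apsnd f) u) \<subseteq> carrier H" using u f by auto
    then show ?thesis
      using u by (simp add: free_lift_eval_word map_apsnd_inverse_word group.eval_inverse_word[OF H])
  qed
  finally show ?thesis using u(1) by (simp add: free_lift_eval_word flip: u(2))
qed

lemma free_lift_eval_word_generate:
  "symbols w \<subseteq> generate G S
    \<Longrightarrow> free_lift S H f (eval_word G w) = eval_word H (map (apsnd (free_lift S H f)) w)"
proof (induct w)
  case Nil
  then show ?case by (simp add: free_lift_one)
next
  case (Cons x w)
  obtain b s where x: "x = (b, s)" by force
  have S: "subgroup (generate G S) G"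
    using basis by (simp add: free_basis_carrier generate_is_subgroup)
  have s: "s \<in> generate G S" and w: "eval_word G w \<in> generate G S"
    using Cons.prems x eval_word_in_subgroup[OF S] by auto
  then show ?case
    using Cons x subgroup.m_inv_closed[OF S s] by (simp add: free_lift_mult free_lift_inv)
qed

end

lemma free_lift_eq_on_basis:
  assumes basis: "free_basis G S" and H: "group H"
    and f: "f ` S \<subseteq> carrier H" and g: "g ` S \<subseteq> carrier H"
    and T: "T \<subseteq> carrier G" "generate G T = generate G S"
    and agree: "\<And>t. t \<in> T \<Longrightarrow> free_lift S H f t = free_lift S H g t"
    and s: "s \<in> S"
  shows "f s = g s"
proof -
  obtain w where w: "symbols w \<subseteq> T" "eval_word G w = s"
    using generate_reduced_word[OF T(1), of s] s T(2) generate.incl[of s S G] by metis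
  have "symbols w \<subseteq> generate G S" using w T generate.incl[of _ T G] by blast
  moreover have "map (apsnd (free_lift S H f)) w = map (apsnd (free_lift S H g)) w"
    using w(1) agree by (intro map_apsnd_cong) blast
  ultimately have "free_lift S H f s = free_lift S H g s"
    using w free_lift_eval_word_generate[OF basis H f] free_lift_eval_word_generate[OF basis H g]
    by metis
  then show ?thesis using free_lift_basis[OF basis H f s] free_lift_basis[OF basis H g s] by simp
qed

end

section \<open>Counting homomorphisms into finite groups\<close>

lemma partial_bijection_extends_to_permutation:
  assumes V: "finite V" and R: "Field R \<subseteq> V"
    and sv: "single_valued R" and sv_conv: "single_valued (converse R)"
  obtains p where "p permutes V" "\<And>a b. (a, b) \<in> R \<Longrightarrow> p a = b"
proof -
  define f where "f a = (THE b. (a, b) \<in> R)" for a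
  have f: "f a = b" if "(a, b) \<in> R" for a b
    unfolding f_def using that sv by (auto simp: single_valued_def)
  have dom: "Domain R \<subseteq> V" and ran: "Range R \<subseteq> V" using R by (auto simp: Field_def)
  have "inj_on f (Domain R)"
  proof (rule inj_onI)
    fix a1 a2 assume "a1 \<in> Domain R" "a2 \<in> Domain R" "f a1 = f a2"
    then obtain b where "(a1, b) \<in> R" "(a2, b) \<in> R" using f by force
    then show "a1 = a2" using sv_conv by (auto simp: single_valued_def)
  qed
  moreover have "f ` Domain R = Range R" using f by force
  ultimately have bij: "bij_betw f (Domain R) (Range R)" by (simp add: bij_betw_def)
  then have "card (V - Domain R) = card (V - Range R)"
    using V dom ran by (simp add: card_Diff_subset finite_subset bij_betw_same_card)
  then obtain h where h: "bij_betw h (V - Domain R) (V - Range R)"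
    using V by (meson finite_Diff finite_same_card_bij)
  define p where "p x = (if x \<in> Domain R then f x else if x \<in> V then h x else x)" for x
  have "bij_betw p (Domain R \<union> (V - Domain R)) (Range R \<union> (V - Range R))"
  proof (rule bij_betw_combine)
    show "bij_betw p (Domain R) (Range R)"
      using bij by (rule bij_betw_cong[THEN iffD1, rotated]) (simp add: p_def)
    show "bij_betw p (V - Domain R) (V - Range R)"
      using h by (rule bij_betw_cong[THEN iffD1, rotated]) (simp add: p_def)
  qed auto
  moreover have "Domain R \<union> (V - Domain R) = V" "Range R \<union> (V - Range R) = V" using dom ran by auto
  ultimately have "bij_betw p V V" by simp
  then have "p permutes V" by (rule bij_imp_permutes) (use dom in \<open>auto simp: p_def\<close>)
  moreover have "p a = b" if "(a, b) \<in> R" for a b using that f by (auto simp: p_def)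
  ultimately show ?thesis using that by blast
qed

lemma eval_word_sym_group_chain:
  assumes "symbols u \<subseteq> carrier (sym_group n)"
    and "\<And>i. i < length u
      \<Longrightarrow> (if fst (u ! i) then snd (u ! i) else inv' (snd (u ! i))) (k + i + 2) = k + i + 1"
  shows "eval_word (sym_group n) u (k + length u + 1) = k + 1"
  using assms
proof (induct u arbitrary: k)
  case Nil
  then show ?case by (simp add: sym_group_one)
next
  case (Cons x u)
  obtain b p where x: "x = (b, p)" by force
  have "eval_word (sym_group n) u (Suc k + length u + 1) = Suc k + 1"
  proof (rule Cons.hyps)
    show "symbols u \<subseteq> carrier (sym_group n)" using Cons.prems by auto
    show "(if fst (u ! i) then snd (u ! i) else inv' (snd (u ! i))) (Suc k + i + 2) = Suc k + i + 1"
      if "i < length u" for i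
      using Cons.prems(2)[of "Suc i"] that unfolding nth_Cons_Suc by (simp add: algebra_simps)
  qed
  moreover have "(if b then p else inv' p) (k + 2) = k + 1"
    using Cons.prems(2)[of 0] unfolding nth_Cons_0 x by (cases b) simp_all
  moreover have "p \<in> carrier (sym_group n)" using Cons.prems x by auto
  ultimately show ?case using x by (cases b) (simp_all add: sym_group_mult)
qed

text \<open>Reducedness makes the prescribed partial maps \<open>i + 2 \<mapsto> i + 1\<close> (or their inverses) injective.\<close>
lemma reduced_word_chain_permutations:
  assumes red: "successively no_cancel w"
  obtains g where "\<And>s. g s permutes {1..length w + 1}"
    "\<And>i. i < length w
      \<Longrightarrow> (if fst (w ! i) then g (snd (w ! i)) else inv' (g (snd (w ! i)))) (i + 2) = i + 1"
proof -
  define L where "L = length w"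
  define R where "R s = {(i + 2, i + 1) | i. i < L \<and> w ! i = (True, s)} \<union>
                         {(i + 1, i + 2) | i. i < L \<and> w ! i = (False, s)}" for s
  have no_cancel_nth: "no_cancel (w ! i) (w ! Suc i)" if "Suc i < L" for i
    using successively_nth[OF red] that L_def by simp
  have ex: "\<exists>p. p permutes {1..L + 1} \<and> (\<forall>a b. (a, b) \<in> R s \<longrightarrow> p a = b)" for s
  proof -
    have "single_valued (R s)"
    proof (rule single_valuedI)
      fix a b c assume "(a, b) \<in> R s" "(a, c) \<in> R s"
      then show "b = c"
        unfolding R_def using no_cancel_nth by (auto simp: no_cancel_def) (metis fst_conv snd_conv)+
    qed
    moreover have "single_valued (converse (R s))"
    proof (rule single_valuedI)
      fix a b c assume "(a, b) \<in> converse (R s)" "(a, c) \<in> converse (R s)"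
      then show "b = c"
        unfolding R_def using no_cancel_nth by (auto simp: no_cancel_def) (metis fst_conv snd_conv)+
    qed
    moreover have "Field (R s) \<subseteq> {1..L + 1}" by (auto simp: R_def Field_def)
    ultimately obtain p where "p permutes {1..L + 1}" "\<And>a b. (a, b) \<in> R s \<Longrightarrow> p a = b"
      using partial_bijection_extends_to_permutation[of "{1..L + 1}" "R s"] by blast
    then show ?thesis by blast
  qed
  define g where "g s = (SOME p. p permutes {1..L + 1} \<and> (\<forall>a b. (a, b) \<in> R s \<longrightarrow> p a = b))" for s
  have g: "g s permutes {1..L + 1}" "(a, b) \<in> R s \<Longrightarrow> g s a = b" for s a b
    using someI_ex[OF ex[of s]] unfolding g_def by auto
  show ?thesis
  proof (rule that)
    show "g s permutes {1..length w + 1}" for s using g(1) by (simp add: L_def)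
    fix i assume i: "i < length w"
    obtain b s where bs: "w ! i = (b, s)" by force
    show "(if fst (w ! i) then g (snd (w ! i)) else inv' (g (snd (w ! i)))) (i + 2) = i + 1"
    proof (cases b)
      case True
      then have "(i + 2, i + 1) \<in> R s" using i bs by (auto simp: R_def L_def)
      then show ?thesis using bs True g(2) by simp
    next
      case False
      then have "(i + 1, i + 2) \<in> R s" using i bs by (auto simp: R_def L_def)
      then have "g s (i + 1) = i + 2" by (rule g(2))
      then have "inv' (g s) (i + 2) = i + 1" using permutes_inverses(2)[OF g(1)] by metis
      then show ?thesis using bs False by simp
    qed
  qed
qed

text \<open>Free groups are residually finite: the permutations above move \<open>length w + 1\<close> to \<open>1\<close>.\<close>
lemma reduced_word_nontrivial_in_sym_group:
  fixes w :: "(bool \<times> 'a) list"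
  assumes ne: "w \<noteq> []" and red: "successively no_cancel w"
  obtains n g where "\<And>s. g s \<in> carrier (sym_group n)"
    "eval_word (sym_group n) (map (apsnd g) w) \<noteq> \<one>\<^bsub>sym_group n\<^esub>"
proof -
  obtain g where perm: "\<And>s. g s permutes {1..length w + 1}"
    and chain: "\<And>i. i < length w
      \<Longrightarrow> (if fst (w ! i) then g (snd (w ! i)) else inv' (g (snd (w ! i)))) (i + 2) = i + 1"
    using reduced_word_chain_permutations[OF red] by blast
  have carrier: "g s \<in> carrier (sym_group (length w + 1))" for s
    using perm by (simp add: sym_group_carrier)
  have "eval_word (sym_group (length w + 1)) (map (apsnd g) w) (0 + length (map (apsnd g) w) + 1) = 0 + 1"
  proof (rule eval_word_sym_group_chain)
    show "symbols (map (apsnd g) w) \<subseteq> carrier (sym_group (length w + 1))" using carrier by auto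
    show "(if fst (map (apsnd g) w ! i) then snd (map (apsnd g) w ! i)
        else inv' (snd (map (apsnd g) w ! i))) (0 + i + 2) = 0 + i + 1"
      if "i < length (map (apsnd g) w)" for i
      using chain[of i] that by (cases "fst (w ! i)") simp_all
  qed
  then have "eval_word (sym_group (length w + 1)) (map (apsnd g) w) \<noteq> id"
    using ne by auto
  then show ?thesis by (intro that[OF carrier]) (simp add: sym_group_one)
qed

lemma finite_carrier_sym_group: "finite (carrier (sym_group n))"
  by (simp add: sym_group_def finite_permutations)

context group
begin

lemma inj_on_restrict_free_lift:
  assumes basis: "free_basis G S" and Q: "group Q"
    and T: "T \<subseteq> carrier G" "generate G T = generate G S"
  shows "inj_on (\<lambda>f. restrict (free_lift S Q f) T) (S \<rightarrow>\<^sub>E carrier Q)"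
proof (rule inj_onI)
  fix f g
  assume f: "f \<in> S \<rightarrow>\<^sub>E carrier Q" and g: "g \<in> S \<rightarrow>\<^sub>E carrier Q"
    and eq: "restrict (free_lift S Q f) T = restrict (free_lift S Q g) T"
  have "f s = g s" if "s \<in> S" for s
  proof (rule free_lift_eq_on_basis[OF basis Q _ _ T _ that])
    show "f ` S \<subseteq> carrier Q" "g ` S \<subseteq> carrier Q" using f g by auto
    show "free_lift S Q f t = free_lift S Q g t" if "t \<in> T" for t
      using eq that by (metis restrict_apply')
  qed
  then show "f = g" using f g by (rule PiE_ext[rotated 2])
qed

lemma restrict_free_lift_PiE:
  assumes basis: "free_basis G S" and Q: "group Q" and T: "T \<subseteq> generate G S"
  shows "(\<lambda>f. restrict (free_lift S Q f) T) ` (S \<rightarrow>\<^sub>E carrier Q) \<subseteq> T \<rightarrow>\<^sub>E carrier Q"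
  using free_lift_closed[OF basis Q] T by fastforce

text \<open>Count homomorphisms into a group of order 2, sending the basis outside \<open>S'\<close> to \<open>\<one>\<close>.\<close>
lemma free_basis_subset_card_le_generating:
  assumes basis: "free_basis G S"
    and T: "T \<subseteq> carrier G" "finite T" "generate G T = generate G S"
    and S': "finite S'" "S' \<subseteq> S"
  shows "card S' \<le> card T"
proof -
  define Q where "Q = sym_group 2"
  have Q: "group Q" and card_Q: "card (carrier Q) = 2"
    by (simp_all add: Q_def sym_group_is_group sym_group_card_carrier)
  have TS: "T \<subseteq> generate G S" using T(3) generate.incl[of _ T G] by blast
  let ?res = "\<lambda>f. restrict (free_lift S Q f) T"
  define ext where "ext h = restrict (\<lambda>s. if s \<in> S' then h s else \<one>\<^bsub>Q\<^esub>) S" for h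
  have "inj_on ext (S' \<rightarrow>\<^sub>E carrier Q)"
  proof (rule inj_onI)
    fix h1 h2
    assume h: "h1 \<in> S' \<rightarrow>\<^sub>E carrier Q" "h2 \<in> S' \<rightarrow>\<^sub>E carrier Q" and eq: "ext h1 = ext h2"
    show "h1 = h2"
    proof (rule PiE_ext[OF h])
      fix s assume "s \<in> S'"
      then have "ext h1 s = h1 s" "ext h2 s = h2 s" using S'(2) by (auto simp: ext_def)
      then show "h1 s = h2 s" using eq by simp
    qed
  qed
  moreover have ext: "ext ` (S' \<rightarrow>\<^sub>E carrier Q) \<subseteq> S \<rightarrow>\<^sub>E carrier Q"
    using monoid.one_closed[OF group.is_monoid[OF Q]] by (auto simp: ext_def)
  ultimately have "inj_on (?res \<circ> ext) (S' \<rightarrow>\<^sub>E carrier Q)"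
    using comp_inj_on inj_on_subset[OF inj_on_restrict_free_lift[OF basis Q T(1,3)]] by blast
  moreover have "(?res \<circ> ext) ` (S' \<rightarrow>\<^sub>E carrier Q) \<subseteq> T \<rightarrow>\<^sub>E carrier Q"
    using restrict_free_lift_PiE[OF basis Q TS] ext unfolding image_comp[symmetric] by blast
  moreover have "finite (T \<rightarrow>\<^sub>E carrier Q)"
    using T(2) by (simp add: Q_def finite_PiE finite_carrier_sym_group)
  ultimately have "card (S' \<rightarrow>\<^sub>E carrier Q) \<le> card (T \<rightarrow>\<^sub>E carrier Q)"
    by (rule card_inj_on_le)
  then show ?thesis using S'(1) T(2) card_Q by (simp add: card_PiE)
qed

lemma free_basis_card_le_generating:
  assumes basis: "free_basis G S"
    and T: "T \<subseteq> carrier G" "finite T" "generate G T = generate G S"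
  shows "finite S \<and> card S \<le> card T"
proof -
  have "finite S"
  proof (rule ccontr)
    assume "infinite S"
    then have "\<exists>S'. finite S' \<and> card S' = Suc (card T) \<and> S' \<subseteq> S"
      by (rule infinite_arbitrarily_large)
    then obtain S' where S': "finite S'" "card S' = Suc (card T)" "S' \<subseteq> S"
      by blast
    have "card S' \<le> card T" using S'(1,3) by (rule free_basis_subset_card_le_generating[OF basis T])
    then show False using S'(2) by simp
  qed
  then show ?thesis using free_basis_subset_card_le_generating[OF basis T] by blast
qed

lemma ex_free_lift_on_equicardinal_generators:
  assumes basis: "free_basis G S" "finite S"
    and T: "T \<subseteq> carrier G" "finite T" "card T = card S" "generate G T = generate G S"
    and Q: "group Q" "finite (carrier Q)" and g: "g ` T \<subseteq> carrier Q"
  obtains f where "f ` S \<subseteq> carrier Q" "\<And>t. t \<in> T \<Longrightarrow> free_lift S Q f t = g t"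
proof -
  let ?res = "\<lambda>f. restrict (free_lift S Q f) T"
  have TS: "T \<subseteq> generate G S" using T(4) generate.incl[of _ T G] by blast
  have "?res ` (S \<rightarrow>\<^sub>E carrier Q) = T \<rightarrow>\<^sub>E carrier Q"
  proof (rule card_subset_eq)
    show "finite (T \<rightarrow>\<^sub>E carrier Q)" using T(2) Q(2) by (simp add: finite_PiE)
    show "?res ` (S \<rightarrow>\<^sub>E carrier Q) \<subseteq> T \<rightarrow>\<^sub>E carrier Q"
      by (rule restrict_free_lift_PiE[OF basis(1) Q(1) TS])
    show "card (?res ` (S \<rightarrow>\<^sub>E carrier Q)) = card (T \<rightarrow>\<^sub>E carrier Q)"
      using card_image[OF inj_on_restrict_free_lift[OF basis(1) Q(1) T(1,4)]] basis(2) T(2,3)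
      by (simp add: card_PiE)
  qed
  moreover have "restrict g T \<in> T \<rightarrow>\<^sub>E carrier Q" using g by auto
  ultimately have "restrict g T \<in> ?res ` (S \<rightarrow>\<^sub>E carrier Q)" by simp
  then obtain f where f: "f \<in> S \<rightarrow>\<^sub>E carrier Q" "restrict g T = ?res f"
    by (rule imageE)
  show ?thesis
  proof (rule that)
    show "f ` S \<subseteq> carrier Q" using f(1) by auto
    show "free_lift S Q f t = g t" if "t \<in> T" for t
      using fun_cong[OF f(2), of t] that by simp
  qed
qed

lemma free_basis_of_equicardinal_generators:
  assumes basis: "free_basis G S" "finite S"
    and T: "T \<subseteq> carrier G" "finite T" "card T = card S" "generate G T = generate G S"
  shows "free_basis G T"
proof (rule ccontr)
  assume "\<not> free_basis G T"
  then obtain w where w: "w \<noteq> []" "successively no_cancel w" "symbols w \<subseteq> T" "eval_word G w = \<one>"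
    using T(1) unfolding free_basis_def reduced_word_iff_successively symbols_def by blast
  obtain n g where g: "\<And>s. g s \<in> carrier (sym_group n)"
    and nontrivial: "eval_word (sym_group n) (map (apsnd g) w) \<noteq> \<one>\<^bsub>sym_group n\<^esub>"
    using reduced_word_nontrivial_in_sym_group[OF w(1,2)] by blast
  have "g ` T \<subseteq> carrier (sym_group n)" using g by blast
  then obtain f where f: "f ` S \<subseteq> carrier (sym_group n)"
    and f_g: "\<And>t. t \<in> T \<Longrightarrow> free_lift S (sym_group n) f t = g t"
    using ex_free_lift_on_equicardinal_generators[OF basis T sym_group_is_group finite_carrier_sym_group]
    by blast
  have "symbols w \<subseteq> generate G S" using w(3) T(4) generate.incl[of _ T G] by blast
  have "eval_word (sym_group n) (map (apsnd g) w)
      = eval_word (sym_group n) (map (apsnd (free_lift S (sym_group n) f)) w)"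
    using w(3) f_g by (intro arg_cong[where f = "eval_word (sym_group n)"] map_apsnd_cong) auto
  also have "\<dots> = free_lift S (sym_group n) f (eval_word G w)"
    using \<open>symbols w \<subseteq> generate G S\<close>
    by (rule free_lift_eval_word_generate[OF basis(1) sym_group_is_group f, symmetric])
  also have "\<dots> = \<one>\<^bsub>sym_group n\<^esub>"
    using w(4) free_lift_one[OF basis(1) sym_group_is_group f] by simp
  finally show False using nontrivial by contradiction
qed

section \<open>Free factors and the bound on the rank\<close>

lemma generate_Un_generate:
  assumes "A \<subseteq> carrier G" "S \<subseteq> carrier G"
  shows "generate G (A \<union> generate G S) = generate G (A \<union> S)"
proof
  show "generate G (A \<union> S) \<subseteq> generate G (A \<union> generate G S)"
    by (rule mono_generate) (auto intro: generate.incl)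
  have "A \<union> generate G S \<subseteq> generate G (A \<union> S)"
    using mono_generate[of S "A \<union> S"] generate.incl[of _ "A \<union> S" G] by blast
  then show "generate G (A \<union> generate G S) \<subseteq> generate G (A \<union> S)"
    using assms by (intro generate_subgroup_incl generate_is_subgroup) auto
qed

lemma factor_reduced_word:
  assumes B: "insert h B \<subseteq> carrier G" and h: "h \<notin> B" and A: "A \<subseteq> generate G B"
    and y: "y \<noteq> \<one>" "if b then y \<in> A else y \<in> generate G {h}"
  obtains u where "u \<noteq> []" "successively no_cancel u" "symbols u \<subseteq> insert h B" "eval_word G u = y"
    "snd (hd u) \<in> B \<longleftrightarrow> b" "snd (last u) \<in> B \<longleftrightarrow> b"
proof -
  have alphabet: "(if b then B else {h}) \<subseteq> carrier G" using B by auto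
  have "y \<in> generate G (if b then B else {h})" using y(2) A by (auto split: if_splits)
  then obtain u where u: "symbols u \<subseteq> (if b then B else {h})" "successively no_cancel u" "eval_word G u = y"
    using generate_reduced_word[OF alphabet] by blast
  have "u \<noteq> []" using u(3) y(1) by auto
  then have "snd (hd u) \<in> symbols u" "snd (last u) \<in> symbols u" by (auto simp: symbols_def)
  then have "snd (hd u) \<in> B \<longleftrightarrow> b" "snd (last u) \<in> B \<longleftrightarrow> b"
    using u(1) h by (auto split: if_splits)
  moreover have "symbols u \<subseteq> insert h B" using u(1) by (auto split: if_splits)
  ultimately show ?thesis using that \<open>u \<noteq> []\<close> u(2,3) by blast
qed

text \<open>Consecutive factors are spelled in the disjoint alphabets \<open>B\<close> and \<open>{h}\<close>, so the
  concatenation of their reduced words is still reduced.\<close>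
lemma alternating_product_reduced_word:
  assumes B: "insert h B \<subseteq> carrier G" and h: "h \<notin> B" and A: "A \<subseteq> generate G B"
  shows "w \<noteq> [] \<Longrightarrow> alternating w \<Longrightarrow>
     \<forall>(b, y) \<in> set w. y \<noteq> \<one> \<and> (if b then y \<in> A else y \<in> generate G {h}) \<Longrightarrow>
     \<exists>W. W \<noteq> [] \<and> successively no_cancel W \<and> symbols W \<subseteq> insert h B
        \<and> eval_word G W = foldr (\<lambda>(b, y) z. y \<otimes> z) w \<one> \<and> (snd (hd W) \<in> B \<longleftrightarrow> fst (hd w))"
proof (induct w)
  case Nil
  then show ?case by simp
next
  case (Cons x w)
  obtain b y where x: "x = (b, y)" by force
  obtain u where u: "u \<noteq> []" "successively no_cancel u" "symbols u \<subseteq> insert h B" "eval_word G u = y"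
      "snd (hd u) \<in> B \<longleftrightarrow> b" "snd (last u) \<in> B \<longleftrightarrow> b"
    using factor_reduced_word[OF B h A, of y b] Cons.prems(3) x by auto
  have u_carrier: "symbols u \<subseteq> carrier G" using u(3) B by blast
  show ?case
  proof (cases w)
    case Nil
    then show ?thesis using u x eval_word_closed[OF u_carrier] by (intro exI[of _ u]) auto
  next
    fix x' w' assume w: "w = x' # w'"
    have "alternating w" and "fst x' \<noteq> b" using Cons.prems(2) w x by (cases x'; auto)+
    then obtain W where W: "W \<noteq> []" "successively no_cancel W" "symbols W \<subseteq> insert h B"
        "eval_word G W = foldr (\<lambda>(b, y) z. y \<otimes> z) w \<one>" "snd (hd W) \<in> B \<longleftrightarrow> fst (hd w)"
      using Cons.hyps Cons.prems(3) w by auto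
    have "snd (last u) \<noteq> snd (hd W)" using u(6) W(5) \<open>fst x' \<noteq> b\<close> w by auto
    then have "successively no_cancel (u @ W)"
      using u(2) W(2) by (simp add: successively_append_iff no_cancel_def)
    moreover have "eval_word G (u @ W) = foldr (\<lambda>(b, y) z. y \<otimes> z) (x # w) \<one>"
      using eval_word_append[OF u_carrier] W(3,4) B u(4) x by (simp add: subset_insertI2 order_trans)
    ultimately show ?thesis using u W(3) x by (intro exI[of _ "u @ W"]) auto
  qed
qed

lemma internal_free_product_insert_free_basis:
  assumes basis: "free_basis G (insert h B)" and h: "h \<notin> B"
    and A: "subgroup A G" "A \<subseteq> generate G B"
  shows "internal_free_product G (generate G (A \<union> {h})) A (generate G {h})"
proof -
  have B: "insert h B \<subseteq> carrier G" using basis by (rule free_basis_carrier)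
  have "generate G (A \<union> {h}) = generate G (A \<union> generate G {h})"
    using generate_Un_generate[OF subgroup.subset[OF A(1)]] B by simp
  moreover have "subgroup (generate G {h}) G" using B by (intro generate_is_subgroup) auto
  moreover have "foldr (\<lambda>(b, y) z. y \<otimes> z) w \<one> \<noteq> \<one>"
    if "w \<noteq> []" "alternating w"
      "\<forall>(b, y) \<in> set w. y \<noteq> \<one> \<and> (if b then y \<in> A else y \<in> generate G {h})" for w
    using alternating_product_reduced_word[OF B h A(2) that] free_basisD[OF basis] by metis
  ultimately show ?thesis using A(1) unfolding internal_free_product_def by blast
qed

lemma insert_free_basis_not_in_generate:
  assumes basis: "free_basis G (insert h B)" and h: "h \<notin> B"
  shows "h \<notin> generate G B"
proof
  assume "h \<in> generate G B"
  moreover have B: "insert h B \<subseteq> carrier G" using basis by (rule free_basis_carrier)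
  ultimately obtain u where u: "symbols u \<subseteq> B" "successively no_cancel u" "eval_word G u = h"
    using generate_reduced_word[of B h] by blast
  have "u = [(True, h)]"
    using u B by (intro free_basis_reduced_word_unique[OF basis]) auto
  then show False using u(1) h by simp
qed

lemma locally_free_fg_free_basis:
  assumes "locally_free G" "T \<subseteq> carrier G" "finite T"
  obtains S where "free_basis G S" "finite S" "card S \<le> card T" "generate G S = generate G T"
proof -
  have "fg_subgroup G (generate G T)" using assms(2,3) by (auto simp: fg_subgroup_def)
  then obtain S where "free_basis G S" "generate G S = generate G T"
    using assms(1) by (auto simp: locally_free_def free_subgroup_def)
  then show ?thesis using free_basis_card_le_generating[of S T] assms(2,3) that by auto
qed

lemma locally_free_generate_insert_cases:
  assumes lf: "locally_free G" and B: "free_basis G B" "finite B" and h: "h \<in> carrier G"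
  obtains S where "free_basis G S" "finite S" "card S \<le> card B"
      "generate G S = generate G (insert h B)"
    | "h \<notin> B" "free_basis G (insert h B)"
proof -
  have T: "insert h B \<subseteq> carrier G" "finite (insert h B)"
    using free_basis_carrier[OF B(1)] B(2) h by auto
  obtain S where S: "free_basis G S" "finite S" "card S \<le> card (insert h B)"
      "generate G S = generate G (insert h B)"
    using locally_free_fg_free_basis[OF lf T] by blast
  show ?thesis
  proof (cases "card S \<le> card B")
    case True
    then show ?thesis using S that(1) by blast
  next
    case False
    then have h_B: "h \<notin> B" using S(3) by (auto simp: insert_absorb)
    then have "card (insert h B) = card S" using False S(3) B(2) by simp
    then have "free_basis G (insert h B)"
      using free_basis_of_equicardinal_generators[OF S(1,2) T] S(4) by simp
    with h_B show ?thesis by (rule that(2))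
  qed
qed

lemma bounded_free_cover:
  assumes lf: "locally_free G"
    and B0: "free_basis G B0" "finite B0" "A \<subseteq> generate G B0"
    and no_extension: "\<nexists>h B. free_basis G (insert h B) \<and> h \<notin> B \<and> A \<subseteq> generate G B"
    and T: "finite T" "T \<subseteq> carrier G"
  shows "\<exists>B. free_basis G B \<and> finite B \<and> card B \<le> card B0 \<and> T \<subseteq> generate G B"
proof -
  from T have "\<exists>B. free_basis G B \<and> finite B \<and> card B \<le> card B0 \<and> A \<subseteq> generate G B
      \<and> T \<subseteq> generate G B"
  proof (induct T rule: finite_induct)
    case empty
    then show ?case using B0 by blast
  next
    case (insert h T)
    then obtain B where B: "free_basis G B" "finite B" "card B \<le> card B0" "A \<subseteq> generate G B"
        "T \<subseteq> generate G B"
      by auto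
    have "h \<in> carrier G" using insert.prems by simp
    with lf B(1,2) show ?case
    proof (cases rule: locally_free_generate_insert_cases)
      case (1 S)
      have "generate G B \<subseteq> generate G S" "h \<in> generate G S"
        using 1(4) mono_generate[of B "insert h B"] generate.incl[of h "insert h B" G] by auto
      then show ?thesis using 1 B by (intro exI[of _ S]) auto
    next
      case 2
      then show ?thesis using no_extension B(4) by blast
    qed
  qed
  then show ?thesis by blast
qed

end

lemma mu_le_card_free_basis:
  assumes "free_basis G B" "finite B" "B \<noteq> {}" "H \<subseteq> generate G B"
  shows "mu G H \<le> card B"
  unfolding mu_def
proof (rule Least_le)
  show "0 < card B \<and> (\<exists>F. free_subgroup_rank G F (card B) \<and> H \<subseteq> F)"
    using assms by (auto simp: free_subgroup_rank_def card_gt_0_iff)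
qed

context group
begin

lemma mu_le_card_without_basis_extension:
  assumes lf: "locally_free G"
    and B0: "free_basis G B0" "finite B0" "A \<subseteq> generate G B0"
    and no_extension: "\<nexists>h B. free_basis G (insert h B) \<and> h \<notin> B \<and> A \<subseteq> generate G B"
    and g: "g \<in> carrier G" "g \<noteq> \<one>"
    and H: "fg_subgroup G H"
  shows "mu G H \<le> card B0"
proof -
  obtain T where T: "finite T" "T \<subseteq> carrier G" "H = generate G T"
    using H by (auto simp: fg_subgroup_def)
  \<comment> \<open>covering \<open>g\<close> as well keeps the basis nonempty, as \<open>mu\<close> only counts positive ranks\<close>
  have "finite (insert g T)" "insert g T \<subseteq> carrier G" using T g by auto
  from bounded_free_cover[OF lf B0 no_extension this]
  obtain B where B: "free_basis G B" "finite B" "card B \<le> card B0" "insert g T \<subseteq> generate G B"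
    by (elim exE conjE)
  have "B \<noteq> {}" using B(4) g generate_empty by auto
  moreover have "H \<subseteq> generate G B"
    unfolding T(3) using B(4) free_basis_carrier[OF B(1)]
    by (intro generate_subgroup_incl generate_is_subgroup) auto
  ultimately have "mu G H \<le> card B" by (rule mu_le_card_free_basis[OF B(1,2)])
  then show ?thesis using B(3) by linarith
qed

lemma rank_finite_if_mu_bounded:
  assumes "\<And>H. fg_subgroup G H \<Longrightarrow> mu G H \<le> M"
  shows "\<not> rank_infinite G"
proof -
  define V where "V = {mu G H | H. fg_subgroup G H}"
  have "V \<subseteq> {..M}" using assms by (auto simp: V_def)
  then have "finite V" by (rule finite_subset) simp
  moreover have "fg_subgroup G (generate G {})" by (auto simp: fg_subgroup_def)
  then have "V \<noteq> {}" by (auto simp: V_def)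
  ultimately have "Max V \<in> V" "\<forall>k \<in> V. k \<le> Max V" by auto
  then show ?thesis unfolding rank_infinite_def V_def by blast
qed

lemma rank_infinite_imp_nontrivial:
  assumes "rank_infinite G"
  shows "\<exists>g \<in> carrier G. g \<noteq> \<one>"
proof (rule ccontr)
  assume trivial: "\<not> ?thesis"
  have "H = {\<one>}" if H: "fg_subgroup G H" for H
  proof -
    obtain T where "T \<subseteq> carrier G" "H = generate G T" using H by (auto simp: fg_subgroup_def)
    then have "H \<subseteq> carrier G" "\<one> \<in> H" using generate_incl generate.one by auto
    then show ?thesis using trivial by blast
  qed
  then have "mu G H \<le> mu G {\<one>}" if "fg_subgroup G H" for H
    using that by simp
  then show False using rank_finite_if_mu_bounded assms by blast
qed

end

theorem lemma2p3:
  fixes G :: "('a, 'm) monoid_scheme"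
  assumes "locally_free G"
    and "rank_infinite G"
    and "fg_subgroup G A"
  shows "\<exists>x \<in> carrier G. x \<notin> A \<and>
           internal_free_product G (generate G (A \<union> {x})) A (generate G {x})"
proof (rule ccontr)
  assume no_free_factor: "\<not> ?thesis"
  interpret group G using assms(1) by (simp add: locally_free_def)
  obtain T0 where T0: "finite T0" "T0 \<subseteq> carrier G" "A = generate G T0"
    using assms(3) by (auto simp: fg_subgroup_def)
  obtain B0 where B0: "free_basis G B0" "finite B0" "generate G B0 = A"
    using locally_free_fg_free_basis[OF assms(1) T0(2,1)] T0(3) by metis
  have no_extension: "\<nexists>h B. free_basis G (insert h B) \<and> h \<notin> B \<and> A \<subseteq> generate G B"
  proof clarify
    fix h B assume basis: "free_basis G (insert h B)" "h \<notin> B" and "A \<subseteq> generate G B"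
    then show False
      using no_free_factor free_basis_carrier[OF basis(1)] insert_free_basis_not_in_generate[OF basis]
        internal_free_product_insert_free_basis[OF basis _ \<open>A \<subseteq> generate G B\<close>]
        generate_is_subgroup[OF T0(2)] T0(3)
      by blast
  qed
  obtain g where g: "g \<in> carrier G" "g \<noteq> \<one>\<^bsub>G\<^esub>"
    using rank_infinite_imp_nontrivial[OF assms(2)] by blast
  have "mu G H \<le> card B0" if "fg_subgroup G H" for H
    using B0(3)[THEN equalityD2] no_extension g that
    by (rule mu_le_card_without_basis_extension[OF assms(1) B0(1,2)])
  then show False using rank_finite_if_mu_bounded assms(2) by blast
qed

end
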